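(* For every $n\ge1$, $R_n=\inf_{\mathbb{P}\in\mathcal{C}_n}R_n(\mathbb{P})$.
   Context: Scheduling on two machines with $n$ tasks. A processing-time matrix is $T\in\mathbb{R}_{++}^{2\times n}$; an allocation is $X\in\{0,1\}^{2\times n}$ with $X_{1j}+X_{2j}=1$; makespan $M(X,T)=\max_{i\in\{1,2\}}\sum_jX_{ij}T_{ij}$; $M^*(T)=\min_XM(X,T)$. $\mathcal{P}_n$ is the set of Borel probability measures on $\mathbb{R}^n$ supported in $\mathbb{R}_{++}^n$. For $\mathbb{P}\in\mathcal{P}_n$, algorithm $\mathcal{A}^{\mathbb{P}}$ draws $\mathbf{z}\sim\mathbb{P}$ and sends task $j$ to machine 1 iff $T_{1j}/T_{2j}<z_j$ (else to machine 2); $M(\mathbb{P},T)$ is its expected makespan, $R_n(\mathbb{P})=\sup_TM(\mathbb{P},T)/M^*(T)\in[1,\infty]$, and $R_n=\inf_{\mathbb{P}\in\mathcal{P}_n}R_n(\mathbb{P})$. $\mathcal{C}_n$ is the set of $\mathbb{P}\in\mathcal{P}_n$ invariant under permutations of coordinates: for every permutation $\pi$ of $[n]$, if $\mathbf{z}\sim\mathbb{P}$ then $(z_{\pi(1)},\dots,z_{\pi(n)})\sim\mathbb{P}$. *)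

theory Defs
  imports "HOL-Probability.Probability"
begin

text \<open>Two machines indexed by the type 2 (elements 1 and 2), tasks indexed by
  a finite type 'n with CARD('n) = n.\<close>

definition pos_matrix :: "real^'n^2 \<Rightarrow> bool" where
  "pos_matrix T \<longleftrightarrow> (\<forall>i j. 0 < T$i$j)"

definition allocation :: "real^'n^2 \<Rightarrow> bool" where
  "allocation X \<longleftrightarrow> (\<forall>i j. X$i$j \<in> {0,1}) \<and> (\<forall>j. X$1$j + X$2$j = 1)"

definition makespan :: "real^'n^2 \<Rightarrow> real^'n^2 \<Rightarrow> real" where
  "makespan X T = max (\<Sum>j\<in>UNIV. X$1$j * T$1$j) (\<Sum>j\<in>UNIV. X$2$j * T$2$j)"

definition opt_makespan :: "real^'n^2 \<Rightarrow> real" where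
  "opt_makespan T = Min {makespan X T | X. allocation X}"

definition Pn :: "(real^'n) measure set" where
  "Pn = {P. sets P = sets borel \<and> prob_space P \<and> (AE z in P. \<forall>j. 0 < z$j)}"

definition alg_alloc :: "real^'n^2 \<Rightarrow> real^'n \<Rightarrow> real^'n^2" where
  "alg_alloc T z = (\<chi> i j. if (i = 1) = (T$1$j / T$2$j < z$j) then 1 else 0)"

definition exp_makespan :: "(real^'n) measure \<Rightarrow> real^'n^2 \<Rightarrow> ennreal" where
  "exp_makespan P T = (\<integral>\<^sup>+ z. ennreal (makespan (alg_alloc T z) T) \<partial>P)"

definition ratio_P :: "(real^'n) measure \<Rightarrow> ennreal" where
  "ratio_P P = (SUP T\<in>{T. pos_matrix T}. exp_makespan P T / ennreal (opt_makespan T))"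

definition ratio_n :: "('n::finite) itself \<Rightarrow> ennreal" where
  "ratio_n (_ :: 'n itself) = (INF P\<in>(Pn :: (real^'n) measure set). ratio_P P)"

definition Cn :: "(real^'n) measure set" where
  "Cn = {P\<in>Pn. \<forall>\<pi>. \<pi> permutes (UNIV :: 'n set) \<longrightarrow>
          distr P borel (\<lambda>z. \<chi> j. z$(\<pi> j)) = P}"

end

theory Submission
  imports Defs
begin

text \<open>Relabelling the tasks by a permutation \<open>p\<close> changes neither the optimal makespan nor the
  set of admissible matrices, and running \<open>\<A>\<^sup>P\<close> on the relabelled instance is the same as
  running it on the original instance with permuted thresholds.  Hence averaging \<open>P\<close> over all
  coordinate permutations yields a permutation-invariant measure whose expected makespan on
  \<open>T\<close> is an average of expected makespans of \<open>P\<close> on relabelled copies of \<open>T\<close>; its ratio is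
  therefore at most \<open>R\<^sub>n(P)\<close>, and the infimum over \<open>\<C>\<^sub>n\<close> is no larger than the one over \<open>\<P>\<^sub>n\<close>.\<close>

definition permute_coords :: "('n \<Rightarrow> 'n) \<Rightarrow> real^'n \<Rightarrow> real^'n" where
  "permute_coords p z = (\<chi> j. z$(p j))"

definition permute_tasks :: "('n \<Rightarrow> 'n) \<Rightarrow> real^'n^2 \<Rightarrow> real^'n^2" where
  "permute_tasks p T = (\<chi> i j. T$i$(p j))"

lemma permute_coords_comp: "permute_coords s (permute_coords p z) = permute_coords (p \<circ> s) z"
  by (simp add: permute_coords_def vec_eq_iff)

lemma permute_tasks_inv:
  assumes "bij p" shows "permute_tasks p (permute_tasks (inv p) T) = T"
  using assms by (simp add: permute_tasks_def vec_eq_iff bij_is_inj)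

lemma makespan_permute_tasks:
  assumes "bij p" shows "makespan (permute_tasks p X) (permute_tasks p T) = makespan X T"
proof -
  have "(\<Sum>j\<in>UNIV. X$i$(p j) * T$i$(p j)) = (\<Sum>j\<in>UNIV. X$i$j * T$i$j)" for i
    using assms by (intro sum.reindex_bij_betw) (simp add: bij_betw_def bij_def)
  then show ?thesis by (simp add: makespan_def permute_tasks_def)
qed

lemma allocation_permute_tasks: "allocation X \<Longrightarrow> allocation (permute_tasks p X)"
  by (simp add: allocation_def permute_tasks_def)

lemma pos_matrix_permute_tasks: "pos_matrix T \<Longrightarrow> pos_matrix (permute_tasks p T)"
  by (simp add: pos_matrix_def permute_tasks_def)

lemma opt_makespan_permute_tasks:
  assumes "bij p" shows "opt_makespan (permute_tasks p T) = opt_makespan T"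
proof -
  have relabel: "makespan X (permute_tasks p T) = makespan (permute_tasks (inv p) X) T" for X
    using makespan_permute_tasks[OF assms, of "permute_tasks (inv p) X" T]
    by (simp add: permute_tasks_inv[OF assms])
  then have "{makespan X (permute_tasks p T) | X. allocation X} = {makespan X T | X. allocation X}"
  proof (intro equalityI subsetI)
    fix m assume "m \<in> {makespan X (permute_tasks p T) | X. allocation X}"
    then show "m \<in> {makespan X T | X. allocation X}"
      using relabel allocation_permute_tasks by blast
  next
    fix m assume "m \<in> {makespan X T | X. allocation X}"
    then obtain X where "allocation X" "m = makespan X T" by blast
    then show "m \<in> {makespan X (permute_tasks p T) | X. allocation X}"
      using makespan_permute_tasks[OF assms, of X T] allocation_permute_tasks[of X p]
      by (metis (mono_tags, lifting) mem_Collect_eq)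
  qed
  then show ?thesis by (simp add: opt_makespan_def)
qed

lemma makespan_alg_alloc_permute_coords:
  assumes "bij p"
  shows "makespan (alg_alloc T (permute_coords p z)) T
       = makespan (alg_alloc (permute_tasks (inv p) T) z) (permute_tasks (inv p) T)"
proof -
  have "alg_alloc T (permute_coords p z) = permute_tasks p (alg_alloc (permute_tasks (inv p) T) z)"
    using assms by (simp add: alg_alloc_def permute_coords_def permute_tasks_def vec_eq_iff bij_is_inj)
  then show ?thesis
    using makespan_permute_tasks[OF assms] permute_tasks_inv[OF assms] by metis
qed

lemma measurable_permute_coords:
  assumes "sets M = sets borel" shows "permute_coords p \<in> M \<rightarrow>\<^sub>M borel"
  unfolding measurable_cong_sets[OF assms refl] permute_coords_def
  by (intro borel_measurable_continuous_onI continuous_intros)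

lemma borel_measurable_vec_nth: "(\<lambda>z::real^'n. z$j) \<in> borel_measurable borel"
  by (intro borel_measurable_continuous_onI continuous_intros)

lemma borel_measurable_alg_makespan:
  "(\<lambda>z. ennreal (makespan (alg_alloc T z) T)) \<in> borel_measurable borel"
  unfolding makespan_def alg_alloc_def
  by (simp add: vec_lambda_beta) (use borel_measurable_vec_nth in measurable)

lemma pred_positive_orthant: "Measurable.pred borel (\<lambda>z::real^'n. \<forall>j. 0 < z$j)"
  using borel_measurable_vec_nth by measurable

definition symmetrize :: "(real^'n::finite) measure \<Rightarrow> (real^'n) measure" where
  "symmetrize P = measure_pmf (pmf_of_set {p. p permutes UNIV}) \<bind> (\<lambda>p. distr P borel (permute_coords p))"

lemma permutations_UNIV_nonempty: "{p. p permutes (UNIV :: 'n set)} \<noteq> {}"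
  using permutes_id by blast

lemma measurable_permute_coords_kernel:
  assumes "sets P = sets borel" "prob_space P"
  shows "(\<lambda>p. distr P borel (permute_coords p)) \<in> measure_pmf Q \<rightarrow>\<^sub>M prob_algebra borel"
  using prob_space.prob_space_distr[OF assms(2) measurable_permute_coords[OF assms(1)]]
  by (auto simp: space_prob_algebra)

lemma nn_integral_symmetrize:
  fixes P :: "(real^'n::finite) measure"
  assumes P: "sets P = sets borel" "prob_space P" and f: "f \<in> borel_measurable borel"
  shows "(\<integral>\<^sup>+z. f z \<partial>symmetrize P)
       = (\<Sum>p\<in>{p. p permutes UNIV}. \<integral>\<^sup>+z. f (permute_coords p z) \<partial>P)
           / of_nat (card {p. p permutes (UNIV :: 'n set)})"
proof -
  have f': "f \<in> borel_measurable (distr P borel (permute_coords p))" for p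
    using f by simp
  have "(\<integral>\<^sup>+z. f z \<partial>symmetrize P)
      = (\<integral>\<^sup>+p. \<integral>\<^sup>+z. f z \<partial>distr P borel (permute_coords p) \<partial>pmf_of_set {p. p permutes UNIV})"
    unfolding symmetrize_def
    by (rule nn_integral_bind[OF f measurable_prob_algebraD[OF measurable_permute_coords_kernel[OF P]]])
  also have "\<dots> = (\<Sum>p\<in>{p. p permutes UNIV}. \<integral>\<^sup>+z. f z \<partial>distr P borel (permute_coords p))
                   / of_nat (card {p. p permutes (UNIV :: 'n set)})"
    by (rule nn_integral_pmf_of_set[OF permutations_UNIV_nonempty finite_permutations]) simp
  finally show ?thesis
    by (simp add: nn_integral_distr[OF measurable_permute_coords[OF P(1)] f'])
qed

lemma symmetrize_in_Pn:
  fixes P :: "(real^'n::finite) measure"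
  assumes P: "P \<in> Pn" shows "symmetrize P \<in> Pn"
proof -
  have sP: "sets P = sets borel" and pP: "prob_space P" and ae: "AE z in P. \<forall>j. 0 < z$j"
    using P by (auto simp: Pn_def)
  note kernel = measurable_permute_coords_kernel[OF sP pP]
  have pmf: "measure_pmf (pmf_of_set {p. p permutes (UNIV :: 'n set)}) \<in> space (prob_algebra (count_space UNIV))"
    by (simp add: space_prob_algebra prob_space_measure_pmf)
  have "AE z in distr P borel (permute_coords p). \<forall>j. 0 < z$j" for p
  proof -
    have "AE z in P. \<forall>j. 0 < permute_coords p z $ j"
      using ae by eventually_elim (simp add: permute_coords_def)
    then show ?thesis
      using pred_positive_orthant
      by (simp add: AE_distr_iff[OF measurable_permute_coords[OF sP]] pred_def)
  qed
  then have "AE z in symmetrize P. \<forall>j. 0 < z$j"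
    unfolding symmetrize_def
    by (subst AE_bind[OF measurable_prob_algebraD[OF kernel] pred_positive_orthant]) simp
  moreover have "sets (symmetrize P) = sets borel" "prob_space (symmetrize P)"
    unfolding symmetrize_def using sets_bind'[OF _ kernel] prob_space_bind'[OF _ kernel] pmf
    by (simp_all add: space_prob_algebra)
  ultimately show ?thesis by (simp add: Pn_def)
qed

lemma symmetrize_in_Cn:
  fixes P :: "(real^'n::finite) measure"
  assumes P: "P \<in> Pn" shows "symmetrize P \<in> Cn"
proof -
  have sP: "sets P = sets borel" and pP: "prob_space P" using P by (auto simp: Pn_def)
  have sQ: "sets (symmetrize P) = sets borel" using symmetrize_in_Pn[OF P] by (auto simp: Pn_def)
  have "distr (symmetrize P) borel (permute_coords s) = symmetrize P" if s: "s permutes UNIV" for s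
  proof (rule measure_eqI)
    fix A assume "A \<in> sets (distr (symmetrize P) borel (permute_coords s))"
    then have A: "A \<in> sets borel" by simp
    have "emeasure (distr (symmetrize P) borel (permute_coords s)) A
        = (\<integral>\<^sup>+z. indicator A (permute_coords s z) \<partial>symmetrize P)"
      using A by (simp add: nn_integral_distr[OF measurable_permute_coords[OF sQ]]
          flip: nn_integral_indicator)
    also have "\<dots> = (\<Sum>p\<in>{p. p permutes UNIV}. \<integral>\<^sup>+z. indicator A (permute_coords (p \<circ> s) z) \<partial>P)
                     / of_nat (card {p. p permutes (UNIV :: 'n set)})"
      using A measurable_permute_coords[of borel s]
      by (subst nn_integral_symmetrize[OF sP pP]) (simp_all add: permute_coords_comp)
    also have "\<dots> = (\<Sum>p\<in>{p. p permutes UNIV}. \<integral>\<^sup>+z. indicator A (permute_coords p z) \<partial>P)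
                     / of_nat (card {p. p permutes (UNIV :: 'n set)})"
      using sum_permutations_compose_right[OF s, of "\<lambda>p. \<integral>\<^sup>+z. indicator A (permute_coords p z) \<partial>P"]
      by simp
    also have "\<dots> = emeasure (symmetrize P) A"
      using A sQ nn_integral_indicator[of A "symmetrize P"]
        nn_integral_symmetrize[OF sP pP, of "indicator A"] by simp
    finally show "emeasure (distr (symmetrize P) borel (permute_coords s)) A = emeasure (symmetrize P) A" .
  qed (use sQ in simp)
  then show ?thesis
    using symmetrize_in_Pn[OF P] by (simp add: Cn_def permute_coords_def[abs_def])
qed

lemma exp_makespan_symmetrize:
  fixes P :: "(real^'n::finite) measure"
  assumes P: "sets P = sets borel" "prob_space P"
  shows "exp_makespan (symmetrize P) T
       = (\<Sum>p\<in>{p. p permutes UNIV}. exp_makespan P (permute_tasks (inv p) T))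
           / of_nat (card {p. p permutes (UNIV :: 'n set)})"
  unfolding exp_makespan_def nn_integral_symmetrize[OF P borel_measurable_alg_makespan]
  by (intro arg_cong2[where f="(/)"] sum.cong refl)
    (simp add: makespan_alg_alloc_permute_coords permutes_bij)

lemma average_divide_le_ennreal:
  fixes e :: "'a \<Rightarrow> ennreal"
  assumes "finite A" "A \<noteq> {}" and le: "\<And>a. a \<in> A \<Longrightarrow> e a / c \<le> r"
  shows "((\<Sum>a\<in>A. e a) / of_nat (card A)) / c \<le> r"
proof -
  have "((\<Sum>a\<in>A. e a) / of_nat (card A)) / c = (\<Sum>a\<in>A. e a / c) / of_nat (card A)"
    by (simp add: divide_ennreal_def sum_distrib_right sum_distrib_left mult_ac)
  also have "\<dots> \<le> (\<Sum>a\<in>A. r) / of_nat (card A)"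
    by (intro divide_right_mono_ennreal sum_mono le)
  also have "\<dots> = r"
    using assms(1,2) by (simp add: mult.commute mult_divide_eq_ennreal)
  finally show ?thesis .
qed

lemma ratio_P_symmetrize_le:
  fixes P :: "(real^'n::finite) measure"
  assumes P: "P \<in> Pn" shows "ratio_P (symmetrize P) \<le> ratio_P P"
  unfolding ratio_P_def
proof (rule SUP_least)
  fix T :: "real^'n^2" assume T: "T \<in> {T. pos_matrix T}"
  have "exp_makespan P (permute_tasks (inv p) T) / ennreal (opt_makespan T)
          \<le> (SUP T\<in>{T. pos_matrix T}. exp_makespan P T / ennreal (opt_makespan T))"
    if "p permutes UNIV" for p
  proof -
    have "bij (inv p)" using that by (simp add: permutes_bij bij_imp_bij_inv)
    then have "opt_makespan T = opt_makespan (permute_tasks (inv p) T)"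
      by (simp add: opt_makespan_permute_tasks)
    then show ?thesis
      using T pos_matrix_permute_tasks
      by (auto intro!: SUP_upper2[where i="permute_tasks (inv p) T"])
  qed
  then show "exp_makespan (symmetrize P) T / ennreal (opt_makespan T)
          \<le> (SUP T\<in>{T. pos_matrix T}. exp_makespan P T / ennreal (opt_makespan T))"
    using P by (auto simp: Pn_def exp_makespan_symmetrize
        intro!: average_divide_le_ennreal permutations_UNIV_nonempty)
qed

theorem corollary2:
  shows "ratio_n TYPE('n::finite) = (INF P\<in>(Cn :: (real^'n) measure set). ratio_P P)"
proof (rule antisym)
  show "ratio_n TYPE('n) \<le> (INF P\<in>(Cn :: (real^'n) measure set). ratio_P P)"
    unfolding ratio_n_def by (rule INF_superset_mono) (auto simp: Cn_def)
  show "(INF P\<in>(Cn :: (real^'n) measure set). ratio_P P) \<le> ratio_n TYPE('n)"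
    unfolding ratio_n_def
  proof (rule INF_greatest)
    fix P :: "(real^'n) measure" assume P: "P \<in> Pn"
    show "(INF Q\<in>(Cn :: (real^'n) measure set). ratio_P Q) \<le> ratio_P P"
      using symmetrize_in_Cn[OF P] ratio_P_symmetrize_le[OF P] by (rule INF_lower2)
  qed
qed

end
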